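(* Let $A$ be the random matrix defined in the context. There is an absolute constant $c$ such that, with probability $1-o(1)$ as $k\to\infty$ (with $D\ge c\log k$), for every $\delta\ge c\sqrt{(\log k)/D}$ we have $1-\delta\le\lambda_\delta(A)\le1$.
   Context: Random instance: let $S_1,\dots,S_k\subseteq[D]$ be independent uniformly random subsets of $[D]$ (each element included independently with probability $1/2$), and let $A\in\mathbb{R}^{D\times k}$ have $A_{ij}=1/|S_j|$ if $i\in S_j$ and $A_{ij}=0$ otherwise. For a matrix $M$, $\|M\|_{\max}=\max_{i,j}|M_{ij}|$. For $\delta\ge 0$, $\lambda_\delta(A)$ is the optimal value of: minimize $\|B\|_{\max}$ over $B\in\mathbb{R}^{k\times D}$ subject to $\|BA-I_k\|_{\max}\le\delta$. *)

theory Defs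
  imports "HOL-Probability.Probability"
begin

text \<open>Matrices are functions nat => nat => real; an m x n matrix M uses entries M i j
  with i < m, j < n. Ground set [D] is rendered as {..<D}, indices of subsets as {..<k}.\<close>

definition maxnorm :: "nat \<Rightarrow> nat \<Rightarrow> (nat \<Rightarrow> nat \<Rightarrow> real) \<Rightarrow> real" where
  "maxnorm m n M = Max (insert 0 {\<bar>M i j\<bar> | i j. i < m \<and> j < n})"

definition subset_of :: "nat \<Rightarrow> (nat \<times> nat \<Rightarrow> bool) \<Rightarrow> nat \<Rightarrow> nat set" where
  "subset_of D X j = {i. i < D \<and> X (j, i)}"

definition matA :: "nat \<Rightarrow> (nat \<times> nat \<Rightarrow> bool) \<Rightarrow> nat \<Rightarrow> nat \<Rightarrow> real" where
  "matA D X i j = (if i \<in> subset_of D X j then 1 / real (card (subset_of D X j)) else 0)"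

definition rand_sets :: "nat \<Rightarrow> nat \<Rightarrow> (nat \<times> nat \<Rightarrow> bool) pmf" where
  "rand_sets D k = Pi_pmf ({..<k} \<times> {..<D}) False (\<lambda>_. bernoulli_pmf (1/2))"

definition feasible :: "nat \<Rightarrow> nat \<Rightarrow> (nat \<Rightarrow> nat \<Rightarrow> real) \<Rightarrow> real \<Rightarrow> (nat \<Rightarrow> nat \<Rightarrow> real) set" where
  "feasible D k A \<delta> = {B. maxnorm k k (\<lambda>j l. (\<Sum>i<D. B j i * A i l) - (if j = l then 1 else 0)) \<le> \<delta>}"

definition lambda_delta :: "nat \<Rightarrow> nat \<Rightarrow> (nat \<Rightarrow> nat \<Rightarrow> real) \<Rightarrow> real \<Rightarrow> real" where
  "lambda_delta D k A \<delta> = Inf (maxnorm k D ` feasible D k A \<delta>)"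

end

theory Submission imports Defs begin

text \<open>Let \<open>s\<^sub>l = |S\<^sub>l|\<close> and \<open>a\<^sub>j\<^sub>l = |S\<^sub>j \<inter> S\<^sub>l|\<close>.
  The sign matrix \<open>B j i = \<plusminus>1\<close> (according as \<open>i \<in> S\<^sub>j\<close>) gives
  \<open>(BA)\<^sub>j\<^sub>l = (2 a\<^sub>j\<^sub>l - s\<^sub>l) / s\<^sub>l\<close>, which is 1 on the diagonal and close to 0 off it
  as soon as every \<open>a\<^sub>j\<^sub>l\<close> is close to its mean \<open>D/2\<close> or \<open>D/4\<close>; hence \<open>\<lambda>\<^sub>\<delta>(A) \<le> 1\<close>.
  Conversely every column of \<open>A\<close> is a probability vector, so
  \<open>1 - \<delta> \<le> (BA)\<^sub>l\<^sub>l \<le> \<parallel>B\<parallel>\<^sub>m\<^sub>a\<^sub>x\<close> for every feasible \<open>B\<close>.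
  Each \<open>a\<^sub>j\<^sub>l\<close> is a sum of \<open>D\<close> independent indicators, so by Hoeffding's inequality it
  deviates from its mean by at least \<open>2\<surd>(D log k)\<close> with probability at most \<open>2 k\<^sup>-\<^sup>8\<close>,
  and a union bound over the \<open>k\<^sup>2\<close> pairs finishes the proof.\<close>

lemma measurable_Pi_eval_pair:
  fixes h :: "'b::countable \<Rightarrow> 'b \<Rightarrow> 'c::topological_space"
  shows "(\<lambda>f. h (f p) (f q)) \<in> borel_measurable (PiM {p, q} (\<lambda>_. count_space UNIV))"
proof (rule measurable_compose_countable[where f="\<lambda>u f. h u (f q)" and g="\<lambda>f. f p"])
  fix u
  show "(\<lambda>f. h u (f q)) \<in> borel_measurable (PiM {p, q} (\<lambda>_. count_space UNIV))"
    by (rule measurable_compose[OF measurable_component_singleton]) auto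
qed (rule measurable_component_singleton, simp)

lemma Pi_pmf_Hoeffding_pairs:
  fixes p q :: "nat \<Rightarrow> 'a" and dflt :: bool and P :: "'a \<Rightarrow> bool pmf" and h :: "nat \<Rightarrow> bool \<Rightarrow> bool \<Rightarrow> real"
  assumes "finite A" and pq: "\<And>i. i < n \<Longrightarrow> p i \<in> A \<and> q i \<in> A"
    and disj: "disjoint_family_on (\<lambda>i. {p i, q i}) {..<n}"
    and h: "\<And>i u v. 0 \<le> h i u v \<and> h i u v \<le> 1"
    and "0 \<le> \<epsilon>" and "0 < n"
  defines "M \<equiv> Pi_pmf A dflt P"
  shows "measure_pmf.prob M
     {X. \<epsilon> \<le> \<bar>(\<Sum>i<n. h i (X (p i)) (X (q i))) - (\<Sum>i<n. measure_pmf.expectation M (\<lambda>X. h i (X (p i)) (X (q i))))\<bar>}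
     \<le> 2 * exp (-2 * \<epsilon>\<^sup>2 / n)"
proof -
  have "prob_space.indep_vars M (\<lambda>i. PiM {p i, q i} (\<lambda>_. count_space UNIV))
      (\<lambda>i X. restrict X {p i, q i}) {..<n}"
    using prob_space.indep_vars_restrict[OF measure_pmf.prob_space_axioms
        indep_vars_Pi_pmf[OF \<open>finite A\<close>] _ disj] pq
    unfolding M_def by auto
  then have "prob_space.indep_vars M (\<lambda>_. borel)
      (\<lambda>i X. (\<lambda>f. h i (f (p i)) (f (q i))) (restrict X {p i, q i})) {..<n}"
    by (rule prob_space.indep_vars_compose2[OF measure_pmf.prob_space_axioms])
      (rule measurable_Pi_eval_pair)
  then have indep: "prob_space.indep_vars M (\<lambda>_. borel) (\<lambda>i X. h i (X (p i)) (X (q i))) {..<n}"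
    by (rule prob_space.indep_vars_cong[OF measure_pmf.prob_space_axioms, THEN iffD1, rotated -1]) auto
  interpret Hoeffding_ineq M "{..<n}" "\<lambda>i X. h i (X (p i)) (X (q i))" "\<lambda>_. 0" "\<lambda>_. 1"
    "\<Sum>i<n. measure_pmf.expectation M (\<lambda>X. h i (X (p i)) (X (q i)))"
    by unfold_locales (auto simp: indep h)
  show ?thesis
    using Hoeffding_ineq_abs_ge[OF \<open>0 \<le> \<epsilon>\<close>] \<open>0 < n\<close> by simp
qed

lemma expectation_prod_bernoulli_Pi_pmf:
  assumes "finite A" and "Q \<subseteq> A" and "0 \<le> p" and "p \<le> 1"
  shows "measure_pmf.expectation (Pi_pmf A dflt (\<lambda>_. bernoulli_pmf p))
           (\<lambda>X. \<Prod>x\<in>Q. of_bool (X x) :: real) = p ^ card Q"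
proof -
  define f where "f x v = (if x \<in> Q then of_bool v else (1::real))" for x v
  have "(\<lambda>X. \<Prod>x\<in>Q. of_bool (X x)) = (\<lambda>X. \<Prod>x\<in>A. f x (X x))"
    using assms(1,2) by (intro ext prod.mono_neutral_cong_left) (auto simp: f_def)
  then have "measure_pmf.expectation (Pi_pmf A dflt (\<lambda>_. bernoulli_pmf p)) (\<lambda>X. \<Prod>x\<in>Q. of_bool (X x))
      = measure_pmf.expectation (Pi_pmf A dflt (\<lambda>_. bernoulli_pmf p)) (\<lambda>X. \<Prod>x\<in>A. f x (X x))"
    by (simp only:)
  also have "\<dots> = (\<Prod>x\<in>A. measure_pmf.expectation (bernoulli_pmf p) (f x))"
    by (rule expectation_prod_Pi_pmf) (use assms(1) in \<open>auto simp: f_def integrable_measure_pmf_finite\<close>)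
  also have "\<dots> = (\<Prod>x\<in>A. if x \<in> Q then p else 1)"
    using assms(3,4) by (intro prod.cong) (auto simp: f_def)
  also have "\<dots> = p ^ card Q"
    using assms(1,2) by (simp add: prod.If_cases Int_absorb1)
  finally show ?thesis .
qed

lemma finite_maxnorm_entries: "finite {\<bar>M i j\<bar> | i j. i < (m::nat) \<and> j < (n::nat)}"
proof -
  have "{\<bar>M i j\<bar> | i j. i < m \<and> j < n} = (\<lambda>(i,j). \<bar>M i j\<bar>) ` ({..<m} \<times> {..<n})" by auto
  then show ?thesis by (simp only: finite_imageI finite_cartesian_product finite_lessThan)
qed

lemma abs_le_maxnorm: "i < m \<Longrightarrow> j < n \<Longrightarrow> \<bar>M i j\<bar> \<le> maxnorm m n M"
  unfolding maxnorm_def by (rule Max_ge) (use finite_maxnorm_entries in auto)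

lemma maxnorm_nonneg: "0 \<le> maxnorm m n M"
  unfolding maxnorm_def by (rule Max_ge) (use finite_maxnorm_entries in auto)

lemma maxnorm_leI:
  "0 \<le> x \<Longrightarrow> (\<And>i j. i < m \<Longrightarrow> j < n \<Longrightarrow> \<bar>M i j\<bar> \<le> x) \<Longrightarrow> maxnorm m n M \<le> x"
  unfolding maxnorm_def by (subst Max_le_iff) (use finite_maxnorm_entries in auto)

lemma finite_subset_of [simp]: "finite (subset_of D X l)"
  by (simp add: subset_of_def)

lemma card_subset_of_Int:
  "real (card (subset_of D X j \<inter> subset_of D X l)) = (\<Sum>i<D. of_bool (X (j,i)) * of_bool (X (l,i)))"
proof -
  have "subset_of D X j \<inter> subset_of D X l = {..<D} \<inter> {i. X (j,i) \<and> X (l,i)}"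
    by (auto simp: subset_of_def)
  then show ?thesis
    by (simp add: sum_of_bool_eq flip: of_bool_conj)
qed

text \<open>The mean of \<open>|S\<^sub>j \<inter> S\<^sub>l|\<close> is \<open>D/2\<close> for \<open>j = l\<close> and \<open>D/4\<close> otherwise.\<close>
definition overlap_deviation :: "nat \<Rightarrow> (nat \<times> nat \<Rightarrow> bool) \<Rightarrow> nat \<Rightarrow> nat \<Rightarrow> real" where
  "overlap_deviation D X j l =
     \<bar>real (card (subset_of D X j \<inter> subset_of D X l)) - real D / (if j = l then 2 else 4)\<bar>"

lemma prob_overlap_deviation_ge:
  assumes "j < k" and "l < k" and "0 < D" and "0 \<le> \<epsilon>"
  shows "measure_pmf.prob (rand_sets D k) {X. \<epsilon> \<le> overlap_deviation D X j l}
           \<le> 2 * exp (-2 * \<epsilon>\<^sup>2 / D)"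
proof -
  have mean: "measure_pmf.expectation (rand_sets D k) (\<lambda>X. of_bool (X (j,i)) * of_bool (X (l,i)))
      = (1::real) / (if j = l then 2 else 4)" if "i < D" for i
  proof -
    have "(\<lambda>X. of_bool (X (j,i)) * of_bool (X (l,i)) :: real) = (\<lambda>X. \<Prod>x\<in>{(j,i), (l,i)}. of_bool (X x))"
      by (cases "j = l") auto
    then have "measure_pmf.expectation (rand_sets D k) (\<lambda>X. of_bool (X (j,i)) * of_bool (X (l,i)))
        = measure_pmf.expectation (rand_sets D k) (\<lambda>X. \<Prod>x\<in>{(j,i), (l,i)}. of_bool (X x) :: real)"
      by (simp only:)
    also have "\<dots> = (1/2) ^ card {(j,i), (l,i)}"
      unfolding rand_sets_def
      by (rule expectation_prod_bernoulli_Pi_pmf) (use assms(1,2) that in auto)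
    also have "\<dots> = 1 / (if j = l then 2 else 4)"
      by (cases "j = l") (simp_all add: power2_eq_square)
    finally show ?thesis .
  qed
  have "measure_pmf.prob (rand_sets D k)
      {X. \<epsilon> \<le> \<bar>(\<Sum>i<D. of_bool (X (j,i)) * of_bool (X (l,i))) -
        (\<Sum>i<D. measure_pmf.expectation (rand_sets D k) (\<lambda>X. of_bool (X (j,i)) * of_bool (X (l,i))))\<bar>}
      \<le> 2 * exp (-2 * \<epsilon>\<^sup>2 / D)"
    unfolding rand_sets_def
    by (rule Pi_pmf_Hoeffding_pairs[where p="\<lambda>i. (j,i)" and q="\<lambda>i. (l,i)"])
      (use assms in \<open>auto simp: disjoint_family_on_def\<close>)
  then show ?thesis
    by (simp add: mean overlap_deviation_def card_subset_of_Int)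
qed

lemma prob_overlap_deviation_ge_union:
  assumes "0 < D" and "0 \<le> \<epsilon>"
  shows "measure_pmf.prob (rand_sets D k) {X. \<exists>j<k. \<exists>l<k. \<epsilon> \<le> overlap_deviation D X j l}
           \<le> 2 * real k ^ 2 * exp (-2 * \<epsilon>\<^sup>2 / D)"
proof -
  let ?E = "\<lambda>p. {X. \<epsilon> \<le> overlap_deviation D X (fst p) (snd p)}"
  have "{X. \<exists>j<k. \<exists>l<k. \<epsilon> \<le> overlap_deviation D X j l} = (\<Union>p\<in>{..<k} \<times> {..<k}. ?E p)"
    by force
  then have "measure_pmf.prob (rand_sets D k) {X. \<exists>j<k. \<exists>l<k. \<epsilon> \<le> overlap_deviation D X j l}
      \<le> (\<Sum>p\<in>{..<k} \<times> {..<k}. measure_pmf.prob (rand_sets D k) (?E p))"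
    by (simp add: measure_pmf.finite_measure_subadditive_finite)
  also have "\<dots> \<le> (\<Sum>p\<in>{..<k} \<times> {..<k}. 2 * exp (-2 * \<epsilon>\<^sup>2 / D))"
    by (intro sum_mono) (use assms prob_overlap_deviation_ge in auto)
  also have "\<dots> = 2 * real k ^ 2 * exp (-2 * \<epsilon>\<^sup>2 / D)"
    by (simp add: power2_eq_square)
  finally show ?thesis .
qed

lemma maxnorm_ge_of_feasible:
  assumes "l < k" and "\<And>i. i < D \<Longrightarrow> 0 \<le> A i l" and "(\<Sum>i<D. A i l) = 1"
    and "B \<in> feasible D k A \<delta>"
  shows "1 - \<delta> \<le> maxnorm k D B"
proof -
  have "\<bar>(\<Sum>i<D. B l i * A i l) - 1\<bar> \<le> \<delta>"
    using abs_le_maxnorm[of l k l k "\<lambda>j l. (\<Sum>i<D. B j i * A i l) - (if j = l then 1 else 0)"] assms(1,4)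
    by (auto simp: feasible_def)
  moreover have "(\<Sum>i<D. B l i * A i l) \<le> (\<Sum>i<D. maxnorm k D B * A i l)"
    using abs_le_maxnorm[of l k _ D B] assms(1,2)
    by (intro sum_mono mult_right_mono) (auto intro: order_trans[OF abs_ge_self])
  ultimately show ?thesis
    by (simp add: assms(3) flip: sum_distrib_left)
qed

lemma lambda_delta_bounds:
  assumes "l < k" and "\<And>i. i < D \<Longrightarrow> 0 \<le> A i l" and "(\<Sum>i<D. A i l) = 1"
    and "B \<in> feasible D k A \<delta>" and "maxnorm k D B \<le> 1"
  shows "1 - \<delta> \<le> lambda_delta D k A \<delta> \<and> lambda_delta D k A \<delta> \<le> 1"
proof
  show "1 - \<delta> \<le> lambda_delta D k A \<delta>"
    unfolding lambda_delta_def
    by (rule cInf_greatest)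
      (use assms(4) in \<open>auto intro: maxnorm_ge_of_feasible[of l k D A _ \<delta>, OF assms(1-3)]\<close>)
  have "lambda_delta D k A \<delta> \<le> maxnorm k D B"
    unfolding lambda_delta_def
    by (rule cInf_lower) (auto intro: bdd_belowI[of _ 0] simp: maxnorm_nonneg assms(4))
  with assms(5) show "lambda_delta D k A \<delta> \<le> 1"
    by simp
qed

lemma sum_mult_matA:
  "(\<Sum>i<D. B i * matA D X i l) = (\<Sum>i\<in>subset_of D X l. B i) / card (subset_of D X l)"
proof -
  have "(\<Sum>i<D. B i * matA D X i l)
      = (\<Sum>i<D. if i \<in> subset_of D X l then B i / card (subset_of D X l) else 0)"
    by (intro sum.cong) (auto simp: matA_def)
  also have "\<dots> = (\<Sum>i\<in>{..<D} \<inter> subset_of D X l. B i / card (subset_of D X l))"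
    by (simp add: sum.inter_restrict)
  also have "{..<D} \<inter> subset_of D X l = subset_of D X l"
    by (auto simp: subset_of_def)
  finally show ?thesis
    by (simp add: sum_divide_distrib)
qed

lemma sign_matrix_feasible:
  fixes \<delta> :: real
  assumes "0 \<le> \<delta>" and nonempty: "\<And>l. l < k \<Longrightarrow> subset_of D X l \<noteq> {}"
    and off_diagonal: "\<And>j l. j < k \<Longrightarrow> l < k \<Longrightarrow> j \<noteq> l \<Longrightarrow>
      \<bar>2 * real (card (subset_of D X j \<inter> subset_of D X l)) - card (subset_of D X l)\<bar>
        \<le> \<delta> * card (subset_of D X l)"
  shows "(\<lambda>j i. 2 * of_bool (i \<in> subset_of D X j) - 1) \<in> feasible D k (matA D X) \<delta>"
  unfolding feasible_def mem_Collect_eq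
proof (rule maxnorm_leI)
  show "0 \<le> \<delta>" by fact
next
  fix j l assume "j < k" "l < k"
  let ?S = "subset_of D X"
  have "?S l \<inter> {i. i \<in> ?S j} = ?S j \<inter> ?S l"
    by blast
  then have "(\<Sum>i\<in>?S l. 2 * of_bool (i \<in> ?S j) - 1 :: real) = 2 * real (card (?S j \<inter> ?S l)) - card (?S l)"
    by (simp add: sum_subtractf sum_of_bool_eq flip: sum_distrib_left)
  then have entry: "(\<Sum>i<D. (2 * of_bool (i \<in> ?S j) - 1) * matA D X i l)
      = (2 * real (card (?S j \<inter> ?S l)) - card (?S l)) / card (?S l)"
    by (simp add: sum_mult_matA)
  have "?S l \<noteq> {}" and "0 < card (?S l)"
    using nonempty[OF \<open>l < k\<close>] by (simp_all add: card_gt_0_iff)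
  show "\<bar>(\<Sum>i<D. (2 * of_bool (i \<in> ?S j) - 1) * matA D X i l) - (if j = l then 1 else 0)\<bar> \<le> \<delta>"
  proof (cases "j = l")
    case True
    with entry show ?thesis
      using \<open>?S l \<noteq> {}\<close> \<open>0 \<le> \<delta>\<close> by simp
  next
    case False
    have "\<bar>2 * real (card (?S j \<inter> ?S l)) - card (?S l)\<bar> / card (?S l) \<le> \<delta>"
      using off_diagonal[OF \<open>j < k\<close> \<open>l < k\<close> False] \<open>0 < card (?S l)\<close>
      by (simp add: pos_divide_le_eq)
    with False show ?thesis
      by (simp add: entry abs_divide)
  qed
qed

lemma lambda_delta_matA_bounds:
  assumes "0 < k" and "\<epsilon> \<le> real D / 4" and "12 * \<epsilon> \<le> \<delta> * real D"
    and deviation: "\<And>j l. j < k \<Longrightarrow> l < k \<Longrightarrow> overlap_deviation D X j l < \<epsilon>"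
  shows "feasible D k (matA D X) \<delta> \<noteq> {} \<and>
         1 - \<delta> \<le> lambda_delta D k (matA D X) \<delta> \<and> lambda_delta D k (matA D X) \<delta> \<le> 1"
proof -
  let ?S = "subset_of D X"
  have card_near: "\<bar>real (card (?S l)) - real D / 2\<bar> < \<epsilon>" if "l < k" for l
    using deviation[OF that that] by (simp add: overlap_deviation_def)
  have Int_near: "\<bar>real (card (?S j \<inter> ?S l)) - real D / 4\<bar> < \<epsilon>" if "j < k" "l < k" "j \<noteq> l" for j l
    using deviation[OF that(1,2)] that(3) by (simp add: overlap_deviation_def)
  have large: "real D / 4 < card (?S l)" if "l < k" for l
    using card_near[OF that] assms(2) unfolding abs_less_iff by linarith
  have nonempty: "?S l \<noteq> {}" if "l < k" for l
    using large[OF that] by (intro notI) simp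
  have "0 < real D" and "0 < \<delta> * real D"
    using card_near[OF \<open>0 < k\<close>] assms(2,3) unfolding abs_less_iff by linarith+
  then have "0 \<le> \<delta>"
    using zero_less_mult_pos2[of \<delta> "real D"] by simp
  have off_diagonal: "\<bar>2 * real (card (?S j \<inter> ?S l)) - card (?S l)\<bar> \<le> \<delta> * card (?S l)"
    if "j < k" "l < k" "j \<noteq> l" for j l
  proof -
    have "\<bar>2 * real (card (?S j \<inter> ?S l)) - card (?S l)\<bar> < 3 * \<epsilon>"
      using Int_near[OF that] card_near[OF that(2)] unfolding abs_less_iff by linarith
    also have "3 * \<epsilon> \<le> \<delta> * (real D / 4)"
      using assms(3) by simp
    also have "\<dots> \<le> \<delta> * card (?S l)"
      using large[OF that(2)] \<open>0 \<le> \<delta>\<close> by (intro mult_left_mono) auto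
    finally show ?thesis by simp
  qed
  define B where "B j i = 2 * of_bool (i \<in> ?S j) - (1::real)" for j i
  have feasible: "B \<in> feasible D k (matA D X) \<delta>"
    unfolding B_def by (rule sign_matrix_feasible[OF \<open>0 \<le> \<delta>\<close> nonempty off_diagonal])
  have "maxnorm k D B \<le> 1"
    by (rule maxnorm_leI) (auto simp: B_def)
  moreover have "0 \<le> matA D X i 0" for i
    by (simp add: matA_def)
  moreover have "(\<Sum>i<D. matA D X i 0) = 1"
    using sum_mult_matA[of "\<lambda>_. 1" D X 0] nonempty[OF \<open>0 < k\<close>] by simp
  ultimately have "1 - \<delta> \<le> lambda_delta D k (matA D X) \<delta> \<and> lambda_delta D k (matA D X) \<delta> \<le> 1"
    using lambda_delta_bounds[OF \<open>0 < k\<close> _ _ feasible] by blast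
  with feasible show ?thesis
    by blast
qed

lemma lambda_delta_matA_bounds_sqrt_ln:
  assumes "2 \<le> k" and "64 * ln (real k) \<le> real D" and "64 * sqrt (ln (real k) / real D) \<le> \<delta>"
    and "\<forall>j<k. \<forall>l<k. overlap_deviation D X j l < 2 * sqrt (real D * ln (real k))"
  shows "feasible D k (matA D X) \<delta> \<noteq> {} \<and>
         1 - \<delta> \<le> lambda_delta D k (matA D X) \<delta> \<and> lambda_delta D k (matA D X) \<delta> \<le> 1"
proof (rule lambda_delta_matA_bounds)
  let ?\<epsilon> = "2 * sqrt (real D * ln (real k))"
  have "0 < ln (real k)"
    using assms(1) by simp
  with assms(2) have "0 < real D"
    by linarith
  have "?\<epsilon>\<^sup>2 \<le> (real D / 4)\<^sup>2"
    using assms(2) \<open>0 < ln (real k)\<close> by (simp add: power_mult_distrib power2_eq_square)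
  then show "?\<epsilon> \<le> real D / 4"
    by (rule power2_le_imp_le) (use \<open>0 < real D\<close> in simp)
  have "sqrt (ln (real k) / real D) * real D = ?\<epsilon> / 2"
    using \<open>0 < real D\<close> by (simp add: real_sqrt_divide real_sqrt_mult field_simps)
  moreover have "64 * sqrt (ln (real k) / real D) * real D \<le> \<delta> * real D"
    using assms(3) by (rule mult_right_mono) simp
  moreover have "0 \<le> ?\<epsilon>"
    using \<open>0 < ln (real k)\<close> by simp
  ultimately show "12 * ?\<epsilon> \<le> \<delta> * real D"
    by linarith
qed (use assms in auto)

lemma prob_overlap_deviation_lt_sqrt_ln:
  assumes "1 \<le> k" and "0 < D"
  shows "1 - 2 / real k \<le> measure_pmf.prob (rand_sets D k)
           {X. \<forall>j<k. \<forall>l<k. overlap_deviation D X j l < 2 * sqrt (real D * ln (real k))}"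
proof -
  let ?\<epsilon> = "2 * sqrt (real D * ln (real k))"
  let ?bad = "{X. \<exists>j<k. \<exists>l<k. ?\<epsilon> \<le> overlap_deviation D X j l}"
  have "0 \<le> ln (real k)"
    using assms(1) by simp
  then have "-2 * ?\<epsilon>\<^sup>2 / real D = - ln (real k ^ 8)"
    using assms(2) by (simp add: power_mult_distrib ln_realpow)
  then have "exp (-2 * ?\<epsilon>\<^sup>2 / real D) = 1 / real k ^ 8"
    using assms(1) by (simp add: exp_minus')
  then have "measure_pmf.prob (rand_sets D k) ?bad \<le> 2 * real k ^ 2 * (1 / real k ^ 8)"
    using prob_overlap_deviation_ge_union[OF assms(2), of ?\<epsilon> k] \<open>0 \<le> ln (real k)\<close> by simp
  also have "\<dots> = 2 / real k ^ 6"
    using assms(1) by (simp add: field_simps)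
  also have "\<dots> \<le> 2 / real k"
    using assms(1) by (intro divide_left_mono self_le_power) auto
  finally have "measure_pmf.prob (rand_sets D k) ?bad \<le> 2 / real k" .
  moreover have "{X. \<forall>j<k. \<forall>l<k. overlap_deviation D X j l < ?\<epsilon>} = UNIV - ?bad"
    by (auto simp: not_le dest: leD)
  ultimately show ?thesis
    using measure_pmf.prob_compl[of ?bad "rand_sets D k"] by simp
qed

theorem lemma6p2:
  "\<exists>c>0. \<forall>\<epsilon>>0. \<exists>K. \<forall>k\<ge>K. \<forall>D::nat. real D \<ge> c * ln (real k) \<longrightarrow>
     measure_pmf.prob (rand_sets D k)
       {X. \<forall>\<delta>\<ge>c * sqrt (ln (real k) / real D).
             feasible D k (matA D X) \<delta> \<noteq> {} \<and>
             1 - \<delta> \<le> lambda_delta D k (matA D X) \<delta> \<and>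
             lambda_delta D k (matA D X) \<delta> \<le> 1}
     \<ge> 1 - \<epsilon>"
proof (rule exI[of _ 64], intro conjI allI impI)
  fix \<eta> :: real assume "0 < \<eta>"
  show "\<exists>K. \<forall>k\<ge>K. \<forall>D::nat. real D \<ge> 64 * ln (real k) \<longrightarrow>
     measure_pmf.prob (rand_sets D k)
       {X. \<forall>\<delta>\<ge>64 * sqrt (ln (real k) / real D).
             feasible D k (matA D X) \<delta> \<noteq> {} \<and>
             1 - \<delta> \<le> lambda_delta D k (matA D X) \<delta> \<and>
             lambda_delta D k (matA D X) \<delta> \<le> 1}
     \<ge> 1 - \<eta>"
  proof (intro exI[of _ "max 2 (nat \<lceil>2 / \<eta>\<rceil>)"] allI impI)
    fix k D :: nat assume k: "max 2 (nat \<lceil>2 / \<eta>\<rceil>) \<le> k" and D: "64 * ln (real k) \<le> real D"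
    have "0 < ln (real k)"
      using k by simp
    with D have "0 < D"
      by simp
    have "1 - \<eta> \<le> 1 - 2 / real k"
      using k \<open>0 < \<eta>\<close> by (simp add: divide_le_eq mult.commute flip: ceiling_le_iff)
    also have "\<dots> \<le> measure_pmf.prob (rand_sets D k)
        {X. \<forall>j<k. \<forall>l<k. overlap_deviation D X j l < 2 * sqrt (real D * ln (real k))}"
      using k \<open>0 < D\<close> by (intro prob_overlap_deviation_lt_sqrt_ln) auto
    also have "\<dots> \<le> measure_pmf.prob (rand_sets D k)
       {X. \<forall>\<delta>\<ge>64 * sqrt (ln (real k) / real D). feasible D k (matA D X) \<delta> \<noteq> {} \<and>
             1 - \<delta> \<le> lambda_delta D k (matA D X) \<delta> \<and> lambda_delta D k (matA D X) \<delta> \<le> 1}"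
      using lambda_delta_matA_bounds_sqrt_ln[OF _ D] k
      by (intro measure_pmf.finite_measure_mono) auto
    finally show "1 - \<eta> \<le> \<dots>" .
  qed
qed simp

end
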